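(* Let $X \subset Y \subset \mathbb{R}^{n}$ be finite sets, let $r>0$, and suppose that $X$ is $r$-dense in $Y$. Let $0 = s_{0} < s_{1} < \dots < s_{m}$ be the phase-change numbers of $Y$, and let $0 \le i < m$ be such that $2r < s_{i+1} - s_{i}$. Then the inclusion $i: V_{s_{i}}(X) \to V_{s_{i}}(Y)$ is a weak homotopy equivalence (its geometric realization is a homotopy equivalence).
   Context: $\mathbb{R}^n$ carries the Euclidean metric $d$. For subsets $A \subset B$ of a metric space and $r>0$, $A$ is $r$-dense in $B$ if for every $b \in B$ there is an $a \in A$ with $d(a,b) < r$. For a finite set $X \subset \mathbb{R}^n$ and $s \geq 0$, $V_{s}(X)$ denotes the Vietoris–Rips complex: the simplicial complex with vertex set $X$ whose simplices are the nonempty subsets $\{x_{0}, \dots, x_{p}\}$ of $X$ with $d(x_{i},x_{j}) \leq s$ for all $i,j$. For $X \subset Y$, $i: V_{s}(X) \to V_{s}(Y)$ denotes the induced inclusion. The phase-change numbers of a finite set $Y$ are the distinct values of $d(y,y')$ for $y,y' \in Y$, listed in increasing order $0 = s_{0} < s_{1} < \dots < s_{m}$. *)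

theory Defs
  imports "HOL-Analysis.Analysis"
begin

definition r_dense :: "real \<Rightarrow> 'a::metric_space set \<Rightarrow> 'a set \<Rightarrow> bool" where
  "r_dense r A B \<longleftrightarrow> (\<forall>b\<in>B. \<exists>a\<in>A. dist a b < r)"

definition vietoris_rips :: "real \<Rightarrow> 'a::metric_space set \<Rightarrow> 'a set set" where
  "vietoris_rips s X = {\<sigma>. \<sigma> \<noteq> {} \<and> \<sigma> \<subseteq> X \<and> finite \<sigma> \<and> (\<forall>x\<in>\<sigma>. \<forall>y\<in>\<sigma>. dist x y \<le> s)}"

text \<open>Geometric realization of a simplicial complex K (given by its simplices, vertices of
  type 'a): points are barycentric coordinate functions 'a => real, nonnegative, summing to 1,
  whose support is a simplex of K. Topology: product topology on 'a => real (for a finite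
  vertex set this is the standard topology of the realization).\<close>
definition geom_real :: "'a set set \<Rightarrow> ('a \<Rightarrow> real) set" where
  "geom_real K = {f. (\<forall>v. 0 \<le> f v) \<and> {v. f v \<noteq> 0} \<in> K \<and> sum f {v. f v \<noteq> 0} = 1}"

definition pc_dists :: "'a::metric_space set \<Rightarrow> real set" where
  "pc_dists Y = {dist y y' | y y'. y \<in> Y \<and> y' \<in> Y}"

definition phase_change :: "'a::metric_space set \<Rightarrow> nat \<Rightarrow> real" where
  "phase_change Y i = sorted_list_of_set (pc_dists Y) ! i"

definition pc_max_index :: "'a::metric_space set \<Rightarrow> nat" where
  "pc_max_index Y = card (pc_dists Y) - 1"

definition homotopy_equivalence_map ::
  "('a::topological_space) set \<Rightarrow> ('b::topological_space) set \<Rightarrow> ('a \<Rightarrow> 'b) \<Rightarrow> bool" where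
  "homotopy_equivalence_map S T f \<longleftrightarrow>
     continuous_on S f \<and> f ` S \<subseteq> T \<and>
     (\<exists>g. continuous_on T g \<and> g ` T \<subseteq> S \<and>
          homotopic_with_canon (\<lambda>_. True) S S (g \<circ> f) id \<and>
          homotopic_with_canon (\<lambda>_. True) T T (f \<circ> g) id)"

end

theory Submission
  imports Defs
begin

text \<open>Choose for every y \<in> Y a point p y \<in> X closer than r, with p = id on X. Since no distance of Y
  falls into (s_i, s_i + 2r), every simplex \<sigma> of V_{s_i}(Y) stays a simplex after adjoining p ` \<sigma>.
  Hence the simplicial retraction p : V_{s_i}(Y) \<rightarrow> V_{s_i}(X) is contiguous to the identity, and the
  straight-line homotopy between the two realized maps runs inside |V_{s_i}(Y)|.\<close>

lemma sum_support_eq: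
  fixes f :: "'a \<Rightarrow> 'b::comm_monoid_add"
  assumes "finite A" "{v. f v \<noteq> 0} \<subseteq> A"
  shows "sum f {v. f v \<noteq> 0} = sum f A"
  by (rule sum.mono_neutral_left) (use assms in \<open>auto intro: finite_subset\<close>)

lemma geom_real_iff_sum:
  assumes "finite V" "\<Union>K \<subseteq> V"
  shows "f \<in> geom_real K \<longleftrightarrow> (\<forall>v. 0 \<le> f v) \<and> {v. f v \<noteq> 0} \<in> K \<and> sum f V = 1"
proof -
  have "{v. f v \<noteq> 0} \<in> K \<Longrightarrow> sum f {v. f v \<noteq> 0} = sum f V"
    using sum_support_eq[OF assms(1)] assms(2) by blast
  then show ?thesis unfolding geom_real_def by auto
qed

definition push_barycentric :: "('a \<Rightarrow> 'b) \<Rightarrow> 'a set \<Rightarrow> ('a \<Rightarrow> real) \<Rightarrow> 'b \<Rightarrow> real" where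
  "push_barycentric p V f = (\<lambda>w. \<Sum>v\<in>{v\<in>V. p v = w}. f v)"

lemma push_barycentric_nonneg: "(\<And>v. 0 \<le> f v) \<Longrightarrow> 0 \<le> push_barycentric p V f w"
  unfolding push_barycentric_def by (simp add: sum_nonneg)

lemma support_push_barycentric:
  assumes "finite V" "\<And>v. 0 \<le> f v" "{v. f v \<noteq> 0} \<subseteq> V"
  shows "{w. push_barycentric p V f w \<noteq> 0} = p ` {v. f v \<noteq> 0}"
proof -
  have "push_barycentric p V f w \<noteq> 0 \<longleftrightarrow> (\<exists>v\<in>V. p v = w \<and> f v \<noteq> 0)" for w
    unfolding push_barycentric_def using assms(1,2) by (subst sum_nonneg_eq_0_iff) auto
  then show ?thesis using assms(3) by auto
qed

lemma sum_push_barycentric: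
  assumes "finite V" "p ` V \<subseteq> V"
  shows "sum (push_barycentric p V f) V = sum f V"
proof -
  have "sum (push_barycentric p V f) V = sum (push_barycentric p V f) (p ` V)"
    by (rule sum.mono_neutral_right)
      (use assms in \<open>auto simp: push_barycentric_def intro!: sum.neutral\<close>)
  also have "\<dots> = sum f V"
    unfolding push_barycentric_def using assms(1) by (intro sum.group) auto
  finally show ?thesis .
qed

lemma push_barycentric_eq_self:
  assumes "finite V" "{v. f v \<noteq> 0} \<subseteq> V" "\<And>v. f v \<noteq> 0 \<Longrightarrow> p v = v"
  shows "push_barycentric p V f = f"
proof
  fix w
  have "push_barycentric p V f w = sum f ({v\<in>V. p v = w} \<inter> {v. f v \<noteq> 0})"
    unfolding push_barycentric_def by (rule sum.mono_neutral_right) (use assms(1) in auto)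
  also have "{v\<in>V. p v = w} \<inter> {v. f v \<noteq> 0} = {w} \<inter> {v. f v \<noteq> 0}"
    using assms(2,3) by auto
  finally show "push_barycentric p V f w = f w" by (cases "f w = 0") auto
qed

lemma continuous_on_push_barycentric: "continuous_on A (push_barycentric p V)"
proof -
  have "continuous_on A (\<lambda>f :: 'a \<Rightarrow> real. f v)" for v
    by (rule continuous_on_subset[OF continuous_on_product_coordinates]) simp
  then show ?thesis
    unfolding push_barycentric_def
    by (intro continuous_on_coordinatewise_then_product continuous_on_sum)
qed

lemma geom_real_D:
  assumes "finite V" "\<Union>K \<subseteq> V" "f \<in> geom_real K"
  shows "\<forall>v. 0 \<le> f v" "{v. f v \<noteq> 0} \<in> K" "sum f V = 1"
  using assms unfolding geom_real_iff_sum[OF assms(1,2)] by auto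

lemma support_push_barycentric_geom_real:
  assumes "finite V" "\<Union>K \<subseteq> V" "f \<in> geom_real K"
  shows "{w. push_barycentric p V f w \<noteq> 0} = p ` {v. f v \<noteq> 0}"
  using geom_real_D[OF assms] assms(2) by (intro support_push_barycentric[OF assms(1)]) auto

lemma push_barycentric_in_geom_real:
  assumes "finite V" "\<Union>K \<subseteq> V" "\<Union>L \<subseteq> V" "p ` V \<subseteq> V"
    and "\<And>\<sigma>. \<sigma> \<in> K \<Longrightarrow> p ` \<sigma> \<in> L"
    and "f \<in> geom_real K"
  shows "push_barycentric p V f \<in> geom_real L"
  unfolding geom_real_iff_sum[OF assms(1,3)]
  using geom_real_D[OF assms(1,2,6)] support_push_barycentric_geom_real[OF assms(1,2,6), of p] assms(5)
    sum_push_barycentric[OF assms(1,4)]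
  by (simp add: push_barycentric_nonneg)

lemma segment_push_barycentric_in_geom_real:
  assumes "finite V" "\<Union>K \<subseteq> V" "p ` V \<subseteq> V"
    and downward_closed: "\<And>\<sigma> \<tau>. \<sigma> \<in> K \<Longrightarrow> \<tau> \<subseteq> \<sigma> \<Longrightarrow> \<tau> \<noteq> {} \<Longrightarrow> \<tau> \<in> K"
    and contiguous: "\<And>\<sigma>. \<sigma> \<in> K \<Longrightarrow> \<sigma> \<union> p ` \<sigma> \<in> K"
    and "f \<in> geom_real K" "t \<in> {0..1}"
  shows "(\<lambda>v. t * f v + (1 - t) * push_barycentric p V f v) \<in> geom_real K"
    (is "?h \<in> _")
proof -
  let ?\<sigma> = "{v. f v \<noteq> 0}"
  note f = geom_real_D[OF assms(1,2,6)]
  have "{v. ?h v \<noteq> 0} \<subseteq> ?\<sigma> \<union> p ` ?\<sigma>"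
    using support_push_barycentric_geom_real[OF assms(1,2,6), of p] by auto
  moreover have "sum ?h V = 1"
    using f sum_push_barycentric[OF assms(1,3), of f]
    by (simp add: sum.distrib flip: sum_distrib_left)
  then have "{v. ?h v \<noteq> 0} \<noteq> {}"
    by (metis (mono_tags, lifting) Collect_empty_eq sum.neutral zero_neq_one)
  moreover have "\<forall>v. 0 \<le> ?h v"
    using assms(7) f(1) push_barycentric_nonneg[of f p V]
    by (simp add: add_nonneg_nonneg mult_nonneg_nonneg)
  ultimately show ?thesis
    using \<open>sum ?h V = 1\<close> downward_closed contiguous[OF f(2)]
    unfolding geom_real_iff_sum[OF assms(1,2)] by blast
qed

lemma continuous_on_segment_push_barycentric:
  "continuous_on A (\<lambda>(t :: real, f) v. t * f v + (1 - t) * push_barycentric p V f v)"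
proof -
  have coordinate: "continuous_on A (\<lambda>z :: real \<times> ('a \<Rightarrow> real). snd z v)" for A v
    by (rule continuous_on_compose2[OF continuous_on_product_coordinates[of v]
          continuous_on_snd[OF continuous_on_id]]) simp
  moreover have "continuous_on A (\<lambda>z :: real \<times> ('a \<Rightarrow> real). push_barycentric p V (snd z) v)"
    for A v
    unfolding push_barycentric_def by (intro continuous_on_sum coordinate)
  ultimately show ?thesis
    unfolding case_prod_beta
    by (intro continuous_on_coordinatewise_then_product continuous_intros)
qed

lemma homotopy_equivalence_map_subcomplex_inclusion:
  fixes K L :: "'a set set" and p :: "'a \<Rightarrow> 'a"
  assumes V: "finite V" "\<Union>K \<subseteq> V" "p ` V \<subseteq> V"
    and downward_closed: "\<And>\<sigma> \<tau>. \<sigma> \<in> K \<Longrightarrow> \<tau> \<subseteq> \<sigma> \<Longrightarrow> \<tau> \<noteq> {} \<Longrightarrow> \<tau> \<in> K"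
    and "L \<subseteq> K"
    and retraction: "\<And>\<sigma>. \<sigma> \<in> K \<Longrightarrow> p ` \<sigma> \<in> L" "\<And>\<sigma> v. \<sigma> \<in> L \<Longrightarrow> v \<in> \<sigma> \<Longrightarrow> p v = v"
    and contiguous: "\<And>\<sigma>. \<sigma> \<in> K \<Longrightarrow> \<sigma> \<union> p ` \<sigma> \<in> K"
  shows "homotopy_equivalence_map (geom_real L) (geom_real K) (\<lambda>f. f)"
proof -
  let ?g = "push_barycentric p V"
  have L_V: "\<Union>L \<subseteq> V" using \<open>L \<subseteq> K\<close> V(2) by blast
  have "homotopic_with_canon (\<lambda>_. True) (geom_real K) (geom_real K) ((\<lambda>f. f) \<circ> ?g) id"
    unfolding homotopic_with_def
    using continuous_on_segment_push_barycentric
      segment_push_barycentric_in_geom_real[OF V downward_closed contiguous]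
    by (intro exI[of _ "\<lambda>(t, f) v. t * f v + (1 - t) * ?g f v"]) auto
  moreover have "?g f = f" if "f \<in> geom_real L" for f
  proof -
    have "{v. f v \<noteq> 0} \<in> L" using that unfolding geom_real_iff_sum[OF V(1) L_V] by blast
    then show ?thesis
      using push_barycentric_eq_self[OF V(1)] retraction(2) L_V by blast
  qed
  then have "homotopic_with_canon (\<lambda>_. True) (geom_real L) (geom_real L) (?g \<circ> (\<lambda>f. f)) id"
    by (intro homotopic_with_equal) auto
  moreover have "geom_real L \<subseteq> geom_real K"
    using \<open>L \<subseteq> K\<close> unfolding geom_real_def by auto
  ultimately show ?thesis
    unfolding homotopy_equivalence_map_def
    using push_barycentric_in_geom_real[OF V(1,2) L_V V(3) retraction(1)]
    by (intro conjI exI[of _ ?g] continuous_on_id continuous_on_push_barycentric) auto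
qed

lemma vietoris_rips_mono: "X \<subseteq> Y \<Longrightarrow> vietoris_rips s X \<subseteq> vietoris_rips s Y"
  unfolding vietoris_rips_def by auto

lemma vietoris_rips_downward_closed:
  "\<sigma> \<in> vietoris_rips s X \<Longrightarrow> \<tau> \<subseteq> \<sigma> \<Longrightarrow> \<tau> \<noteq> {} \<Longrightarrow> \<tau> \<in> vietoris_rips s X"
  unfolding vietoris_rips_def by (auto intro: finite_subset)

lemma r_dense_obtains_retraction:
  assumes "r_dense r X Y" "X \<subseteq> Y"
  obtains p where "\<And>y. y \<in> Y \<Longrightarrow> p y \<in> X" "\<And>y. y \<in> Y \<Longrightarrow> dist (p y) y < r"
    "\<And>x. x \<in> X \<Longrightarrow> p x = x"
proof -
  have "\<forall>y\<in>Y. \<exists>x. x \<in> X \<and> dist x y < r \<and> (y \<in> X \<longrightarrow> x = y)"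
  proof
    fix y assume "y \<in> Y"
    obtain x where "x \<in> X" "dist x y < r" using assms(1) \<open>y \<in> Y\<close> unfolding r_dense_def by blast
    moreover from this have "0 < r" using zero_le_dist[of x y] by linarith
    ultimately show "\<exists>x. x \<in> X \<and> dist x y < r \<and> (y \<in> X \<longrightarrow> x = y)"
      by (cases "y \<in> X") auto
  qed
  then obtain p where "\<forall>y\<in>Y. p y \<in> X \<and> dist (p y) y < r \<and> (y \<in> X \<longrightarrow> p y = y)"
    by (auto dest!: bchoice)
  then show ?thesis using that assms(2) by blast
qed

lemma homotopy_equivalence_map_vietoris_rips_inclusion:
  fixes X Y :: "'a::metric_space set"
  assumes "finite Y" "X \<subseteq> Y" "r_dense r X Y"
    and gap: "\<And>a b. a \<in> Y \<Longrightarrow> b \<in> Y \<Longrightarrow> dist a b < s + 2 * r \<Longrightarrow> dist a b \<le> s"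
  shows "homotopy_equivalence_map (geom_real (vietoris_rips s X)) (geom_real (vietoris_rips s Y))
           (\<lambda>f. f)"
proof -
  obtain p where p: "\<And>y. y \<in> Y \<Longrightarrow> p y \<in> X" "\<And>y. y \<in> Y \<Longrightarrow> dist (p y) y < r"
    "\<And>x. x \<in> X \<Longrightarrow> p x = x"
    using r_dense_obtains_retraction[OF assms(3,2)] by blast
  have contiguous: "\<sigma> \<union> p ` \<sigma> \<in> vietoris_rips s Y" if "\<sigma> \<in> vietoris_rips s Y" for \<sigma>
  proof -
    have \<sigma>: "\<sigma> \<noteq> {}" "\<sigma> \<subseteq> Y" "finite \<sigma>" "\<forall>a\<in>\<sigma>. \<forall>b\<in>\<sigma>. dist a b \<le> s"
      using that unfolding vietoris_rips_def by auto
    obtain y where "y \<in> Y" using \<sigma>(1,2) by blast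
    then have "0 < r" using p(2)[of y] zero_le_dist[of "p y" y] by linarith
    then have near: "\<exists>a'\<in>\<sigma>. dist a a' < r" if a: "a \<in> \<sigma> \<union> p ` \<sigma>" for a
    proof (cases "a \<in> \<sigma>")
      case True
      then show ?thesis using \<open>0 < r\<close> by (intro bexI[of _ a]) auto
    next
      case False
      then obtain a' where "a' \<in> \<sigma>" "a = p a'" using a by blast
      then show ?thesis using p(2) \<sigma>(2) by (intro bexI[of _ a']) (auto simp: dist_commute)
    qed
    have "dist a b \<le> s" if ab: "a \<in> \<sigma> \<union> p ` \<sigma>" "b \<in> \<sigma> \<union> p ` \<sigma>" for a b
    proof -
      obtain a' where a': "a' \<in> \<sigma>" "dist a a' < r" using near[OF ab(1)] by blast
      obtain b' where b': "b' \<in> \<sigma>" "dist b b' < r" using near[OF ab(2)] by blast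
      have "dist a b \<le> dist a a' + dist a' b' + dist b b'"
        using dist_triangle[of a b a'] dist_triangle[of a' b b'] dist_commute[of b' b] by linarith
      also have "\<dots> < s + 2 * r" using a' b' \<sigma>(4) by fastforce
      finally have "dist a b < s + 2 * r" .
      moreover have "a \<in> Y" "b \<in> Y" using ab \<sigma>(2) p(1) assms(2) by auto
      ultimately show ?thesis using gap by blast
    qed
    moreover have "p ` \<sigma> \<subseteq> Y" using \<sigma>(2) p(1) assms(2) by blast
    ultimately show ?thesis using \<sigma> unfolding vietoris_rips_def by auto
  qed
  show ?thesis
  proof (rule homotopy_equivalence_map_subcomplex_inclusion[OF assms(1)])
    show "\<Union>(vietoris_rips s Y) \<subseteq> Y" "p ` Y \<subseteq> Y"
      using p(1) assms(2) by (auto simp: vietoris_rips_def)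
    show "vietoris_rips s X \<subseteq> vietoris_rips s Y"
      by (rule vietoris_rips_mono[OF assms(2)])
    show "p ` \<sigma> \<in> vietoris_rips s X" if "\<sigma> \<in> vietoris_rips s Y" for \<sigma>
      using vietoris_rips_downward_closed[OF contiguous[OF that], of "p ` \<sigma>"] that p(1)
      unfolding vietoris_rips_def by auto
    show "p v = v" if "\<sigma> \<in> vietoris_rips s X" "v \<in> \<sigma>" for \<sigma> v
      using that p(3) by (auto simp: vietoris_rips_def)
  qed (use contiguous vietoris_rips_downward_closed in blast)+
qed

lemma dist_le_phase_change_if_less_next:
  fixes Y :: "'a::metric_space set"
  assumes "finite Y" "i < pc_max_index Y" "a \<in> Y" "b \<in> Y"
    and "dist a b < phase_change Y (Suc i)"
  shows "dist a b \<le> phase_change Y i"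
proof -
  define L where "L = sorted_list_of_set (pc_dists Y)"
  have "pc_dists Y = (\<lambda>(a, b). dist a b) ` (Y \<times> Y)" unfolding pc_dists_def by auto
  then have "finite (pc_dists Y)" using assms(1) by simp
  then have "Suc i < length L" "sorted L" "dist a b \<in> set L"
    using assms(2-4) unfolding L_def pc_max_index_def pc_dists_def by auto
  then obtain j where j: "j < length L" "L ! j = dist a b" by (auto simp: in_set_conv_nth)
  have "\<not> Suc i \<le> j"
    using sorted_nth_mono[OF \<open>sorted L\<close>, of "Suc i" j] j assms(5)
    unfolding phase_change_def L_def[symmetric] by auto
  then show ?thesis
    using sorted_nth_mono[OF \<open>sorted L\<close>, of j i] j \<open>Suc i < length L\<close>
    unfolding phase_change_def L_def[symmetric] by simp
qed

theorem corollary2: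
  fixes X Y :: "(real ^ 'n) set" and r :: real and i :: nat
  assumes "finite Y" and "X \<subseteq> Y" and "r > 0"
    and "r_dense r X Y"
    and "i < pc_max_index Y"
    and "2 * r < phase_change Y (Suc i) - phase_change Y i"
  shows "homotopy_equivalence_map
           (geom_real (vietoris_rips (phase_change Y i) X))
           (geom_real (vietoris_rips (phase_change Y i) Y))
           (\<lambda>f. f)"
proof (rule homotopy_equivalence_map_vietoris_rips_inclusion[OF assms(1,2,4)])
  fix a b assume "a \<in> Y" "b \<in> Y" "dist a b < phase_change Y i + 2 * r"
  then show "dist a b \<le> phase_change Y i"
    using dist_le_phase_change_if_less_next[OF assms(1,5)] assms(6) by force
qed

end
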